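(* Let $A_0=(a_1|a_2)\in\mathbb{Z}[i]^{4\times2}$ be a $2$-icube of norm $\lambda$ with $a_1$ primitive. Then $d_2(A_0)$ divides $\lambda$ in $\mathbb{Z}[i]$.
   Context: A $2$-icube of norm $\lambda>0$ is $(a_1|a_2)$ with $a_1^*a_1=a_2^*a_2=\lambda$, $a_1^*a_2=0$. A vector is primitive if its entries have no common non-unit divisor. $d_2(A_0)$ is the gcd of the $2\times2$ minors of $A_0$. *)

theory Defs
  imports Complex_Main
begin

definition gauss_int :: "complex set" where
  "gauss_int = {z. Re z \<in> \<int> \<and> Im z \<in> \<int>}"

definition gdvd :: "complex \<Rightarrow> complex \<Rightarrow> bool" where
  "gdvd a b \<longleftrightarrow> (\<exists>c\<in>gauss_int. b = a * c)"

definition gunit :: "complex \<Rightarrow> bool" where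
  "gunit u \<longleftrightarrow> u \<in> gauss_int \<and> gdvd u 1"

definition gprimitive :: "nat \<Rightarrow> (nat \<Rightarrow> complex) \<Rightarrow> bool" where
  "gprimitive n v \<longleftrightarrow> (\<forall>d\<in>gauss_int. (\<forall>k<n. gdvd d (v k)) \<longrightarrow> gunit d)"

definition is_ggcd :: "complex \<Rightarrow> complex set \<Rightarrow> bool" where
  "is_ggcd g S \<longleftrightarrow> g \<in> gauss_int \<and> (\<forall>s\<in>S. gdvd g s) \<and>
     (\<forall>d\<in>gauss_int. (\<forall>s\<in>S. gdvd d s) \<longrightarrow> gdvd d g)"

definition minors2 :: "nat \<Rightarrow> (nat \<Rightarrow> complex) \<Rightarrow> (nat \<Rightarrow> complex) \<Rightarrow> complex set" where
  "minors2 n a1 a2 = {a1 i * a2 j - a1 j * a2 i | i j. i < j \<and> j < n}"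

definition cinner :: "nat \<Rightarrow> (nat \<Rightarrow> complex) \<Rightarrow> (nat \<Rightarrow> complex) \<Rightarrow> complex" where
  "cinner n a b = (\<Sum>k<n. cnj (a k) * b k)"

definition icube2 :: "nat \<Rightarrow> (nat \<Rightarrow> complex) \<Rightarrow> (nat \<Rightarrow> complex) \<Rightarrow> real \<Rightarrow> bool" where
  "icube2 n a1 a2 lam \<longleftrightarrow> lam > 0 \<and> (\<forall>k<n. a1 k \<in> gauss_int \<and> a2 k \<in> gauss_int) \<and>
     cinner n a1 a1 = complex_of_real lam \<and> cinner n a2 a2 = complex_of_real lam \<and>
     cinner n a1 a2 = 0"

end

theory Submission
  imports Defs
begin

text \<open>Weighting the minors of column \<open>j\<close> by \<open>cnj (a2 i)\<close> and summing gives
  \<open>a2 j \<cdot> a2\<^sup>*a1 - a1 j \<cdot> a2\<^sup>*a2 = -\<lambda> a1 j\<close>, so \<open>d\<^sub>2\<close> divides every \<open>\<lambda> a1 j\<close>.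
  Since \<open>\<int>[i]\<close> is Euclidean, the ideal \<open>{y. d\<^sub>2 | \<lambda> y}\<close> contains the primitive
  vector \<open>a1\<close> and hence \<open>1\<close>; thus \<open>d\<^sub>2 | \<lambda>\<close>.\<close>

lemma gauss_int_iff: "z \<in> gauss_int \<longleftrightarrow> Re z \<in> \<int> \<and> Im z \<in> \<int>"
  by (simp add: gauss_int_def)

lemma gauss_int_0 [simp]: "0 \<in> gauss_int"
  by (simp add: gauss_int_iff)

lemma gauss_int_add: "a \<in> gauss_int \<Longrightarrow> b \<in> gauss_int \<Longrightarrow> a + b \<in> gauss_int"
  and gauss_int_diff: "a \<in> gauss_int \<Longrightarrow> b \<in> gauss_int \<Longrightarrow> a - b \<in> gauss_int"
  and gauss_int_mult: "a \<in> gauss_int \<Longrightarrow> b \<in> gauss_int \<Longrightarrow> a * b \<in> gauss_int"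
  and gauss_int_cnj: "a \<in> gauss_int \<Longrightarrow> cnj a \<in> gauss_int"
  by (simp_all add: gauss_int_iff)

lemma gdvd_0 [simp]: "gdvd d 0"
  unfolding gdvd_def by (metis gauss_int_0 mult_zero_right)

lemma gdvd_add: "gdvd d a \<Longrightarrow> gdvd d b \<Longrightarrow> gdvd d (a + b)"
  unfolding gdvd_def by (metis distrib_left gauss_int_add)

lemma gdvd_diff: "gdvd d a \<Longrightarrow> gdvd d b \<Longrightarrow> gdvd d (a - b)"
  unfolding gdvd_def by (metis right_diff_distrib gauss_int_diff)

lemma gdvd_minus_iff [simp]: "gdvd d (- a) \<longleftrightarrow> gdvd d a"
  using gdvd_diff[OF gdvd_0] by (metis minus_minus diff_0)

lemma gdvd_mult_left: "gdvd d a \<Longrightarrow> c \<in> gauss_int \<Longrightarrow> gdvd d (c * a)"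
  unfolding gdvd_def by (metis mult.left_commute gauss_int_mult)

lemma gdvd_sum: "(\<And>i. i \<in> A \<Longrightarrow> gdvd d (f i)) \<Longrightarrow> gdvd d (sum f A)"
  by (induction A rule: infinite_finite_induct) (auto simp: gdvd_add)

lemma not_gunit_2: "\<not> gunit 2"
proof
  assume "gunit 2"
  then obtain c where "c \<in> gauss_int" "1 = 2 * c"
    unfolding gunit_def gdvd_def by blast
  then obtain m :: int where "Re c = of_int m" "2 * Re c = 1"
    by (auto simp: gauss_int_iff elim!: Ints_cases dest: arg_cong[where f = Re])
  then have "2 * m = 1"
    by (metis of_int_eq_1_iff of_int_mult of_int_numeral)
  then show False
    by presburger
qed

lemma gprimitive_nonzero:
  assumes "gprimitive n v"
  obtains k where "k < n" "v k \<noteq> 0"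
proof -
  have "\<not> (\<forall>k<n. v k = 0)"
  proof
    assume "\<forall>k<n. v k = 0"
    then have "gunit 2"
      using assms unfolding gprimitive_def by (auto simp: gauss_int_iff)
    then show False
      using not_gunit_2 by blast
  qed
  then show thesis
    using that by blast
qed

definition gauss_norm :: "complex \<Rightarrow> nat" where
  "gauss_norm z = nat (\<lfloor>Re z\<rfloor>\<^sup>2 + \<lfloor>Im z\<rfloor>\<^sup>2)"

lemma gauss_norm_eq_cmod_square:
  assumes "z \<in> gauss_int"
  shows "real (gauss_norm z) = (cmod z)\<^sup>2"
proof -
  from assms obtain a b where "Re z = of_int a" "Im z = of_int b"
    unfolding gauss_int_iff by (auto elim!: Ints_cases)
  then show ?thesis
    unfolding gauss_norm_def cmod_power2 by simp
qed

lemma gauss_int_division: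
  assumes "a \<in> gauss_int" "b \<in> gauss_int" "b \<noteq> 0"
  obtains q where "q \<in> gauss_int" "cmod (a - q * b) < cmod b"
proof -
  define w where "w = a / b"
  define q where "q = Complex (of_int (round (Re w))) (of_int (round (Im w)))"
  have q: "q \<in> gauss_int"
    by (simp add: q_def gauss_int_iff)
  have "\<bar>Re (w - q)\<bar> \<le> 1/2" "\<bar>Im (w - q)\<bar> \<le> 1/2"
    using of_int_round_abs_le[of "Re w"] of_int_round_abs_le[of "Im w"]
    by (simp_all add: q_def abs_minus_commute)
  then have "(Re (w - q))\<^sup>2 \<le> (1/2)\<^sup>2" "(Im (w - q))\<^sup>2 \<le> (1/2)\<^sup>2"
    by (metis power2_abs power_mono abs_ge_zero)+
  then have "(cmod (w - q))\<^sup>2 < 1"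
    unfolding cmod_power2 by (simp add: power_divide)
  then have "cmod (w - q) < 1"
    by (simp add: power_less_one_iff)
  moreover have "a - q * b = (w - q) * b"
    using assms(3) by (simp add: w_def field_simps)
  ultimately have "cmod (a - q * b) < cmod b"
    using assms(3) by (simp add: norm_mult)
  with q that show thesis
    by blast
qed

definition gauss_ideal :: "complex set \<Rightarrow> bool" where
  "gauss_ideal S \<longleftrightarrow> S \<subseteq> gauss_int \<and>
     (\<forall>x\<in>S. \<forall>y\<in>S. x - y \<in> S) \<and> (\<forall>c\<in>gauss_int. \<forall>x\<in>S. c * x \<in> S)"

text \<open>A nonzero element of least norm divides every element of the ideal, so it divides
  the entries of the primitive vector and is a unit.\<close>
lemma gauss_ideal_primitive_one:
  assumes S: "gauss_ideal S" and v: "gprimitive n v" "\<forall>k<n. v k \<in> S"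
  shows "1 \<in> S"
proof -
  have sub: "S \<subseteq> gauss_int" and diff: "\<And>x y. x \<in> S \<Longrightarrow> y \<in> S \<Longrightarrow> x - y \<in> S"
    and mult: "\<And>c x. c \<in> gauss_int \<Longrightarrow> x \<in> S \<Longrightarrow> c * x \<in> S"
    using S unfolding gauss_ideal_def by auto
  obtain k0 where "k0 < n" "v k0 \<noteq> 0"
    using gprimitive_nonzero[OF v(1)] .
  then obtain g where g: "g \<in> S" "g \<noteq> 0"
    and g_least: "\<And>y. y \<in> S \<Longrightarrow> y \<noteq> 0 \<Longrightarrow> gauss_norm g \<le> gauss_norm y"
    using ex_has_least_nat[of "\<lambda>y. y \<in> S \<and> y \<noteq> 0" "v k0" gauss_norm] v(2) by blast
  have gG: "g \<in> gauss_int"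
    using g sub by blast
  have "gdvd g (v k)" if "k < n" for k
  proof -
    have vk: "v k \<in> S"
      using v(2) that by blast
    then obtain q where q: "q \<in> gauss_int" "cmod (v k - q * g) < cmod g"
      using gauss_int_division[of "v k" g] sub gG g(2) by blast
    have r: "v k - q * g \<in> S"
      using diff[OF vk mult[OF q(1) g(1)]] .
    have "v k - q * g = 0"
    proof (rule ccontr)
      assume "v k - q * g \<noteq> 0"
      then have "gauss_norm g \<le> gauss_norm (v k - q * g)"
        using g_least r by blast
      moreover have "real (gauss_norm (v k - q * g)) < real (gauss_norm g)"
        using q(2) r sub gG by (simp add: gauss_norm_eq_cmod_square subsetD power_strict_mono)
      ultimately show False
        by linarith
    qed
    then show ?thesis
      unfolding gdvd_def using q(1) by (auto simp: mult.commute)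
  qed
  then have "gunit g"
    using v(1) gG unfolding gprimitive_def by blast
  then obtain c where "c \<in> gauss_int" "1 = g * c"
    unfolding gunit_def gdvd_def by blast
  then show "1 \<in> S"
    using mult[OF _ g(1)] by (metis mult.commute)
qed

lemma gdvd_cancel_primitive:
  assumes "gprimitive n v" "\<forall>k<n. v k \<in> gauss_int" "\<forall>k<n. gdvd d (x * v k)"
  shows "gdvd d x"
proof -
  define S where "S = {y \<in> gauss_int. gdvd d (x * y)}"
  have "gauss_ideal S"
    unfolding gauss_ideal_def S_def
    by (auto simp: gauss_int_diff gauss_int_mult right_diff_distrib mult.left_commute
        intro: gdvd_diff gdvd_mult_left)
  moreover have "\<forall>k<n. v k \<in> S"
    using assms(2,3) by (simp add: S_def)
  ultimately have "1 \<in> S"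
    using gauss_ideal_primitive_one assms(1) by blast
  then show ?thesis
    by (simp add: S_def)
qed

lemma cinner_swap: "cinner n b a = cnj (cinner n a b)"
  unfolding cinner_def by (simp add: mult.commute)

lemma sum_cnj_mult_minor:
  "(\<Sum>i<n. cnj (b i) * (a i * b j - a j * b i)) = b j * cinner n b a - a j * cinner n b b"
  unfolding cinner_def by (simp add: sum_distrib_left sum_subtractf algebra_simps)

lemma ggcd_dvd_minor:
  assumes "is_ggcd g (minors2 n a b)" "i < n" "j < n"
  shows "gdvd g (a i * b j - a j * b i)"
proof -
  have minor: "gdvd g (a i * b j - a j * b i)" if "i < j" "j < n" for i j
    using assms(1) that unfolding is_ggcd_def minors2_def by blast
  consider "i < j" | "i = j" | "j < i"
    by linarith
  then show ?thesis
  proof cases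
    case 3
    then have "gdvd g (a j * b i - a i * b j)"
      using minor[of j i] assms(2) by blast
    then show ?thesis
      by (metis gdvd_minus_iff minus_diff_eq)
  qed (use minor assms(3) in auto)
qed

lemma icube2_ggcd_minors_dvd_norm:
  assumes cube: "icube2 n a1 a2 lam" and prim: "gprimitive n a1"
    and gcd: "is_ggcd d2 (minors2 n a1 a2)"
  shows "gdvd d2 (complex_of_real lam)"
proof -
  have G: "\<And>k. k < n \<Longrightarrow> a1 k \<in> gauss_int \<and> a2 k \<in> gauss_int"
    and c22: "cinner n a2 a2 = complex_of_real lam" and c21: "cinner n a2 a1 = 0"
    using cube cinner_swap[of n a2 a1] unfolding icube2_def by auto
  have "gdvd d2 (complex_of_real lam * a1 j)" if "j < n" for j
  proof -
    have "gdvd d2 (\<Sum>i<n. cnj (a2 i) * (a1 i * a2 j - a1 j * a2 i))"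
      using ggcd_dvd_minor[OF gcd _ that] G by (auto intro!: gdvd_sum gdvd_mult_left gauss_int_cnj)
    then show ?thesis
      by (simp add: sum_cnj_mult_minor c21 c22 mult.commute)
  qed
  then show ?thesis
    using gdvd_cancel_primitive[OF prim] G by blast
qed

theorem mainTheorem19:
  fixes a1 a2 :: "nat \<Rightarrow> complex" and lam :: real and d2 :: complex
  assumes "icube2 4 a1 a2 lam"
    and "gprimitive 4 a1"
    and "is_ggcd d2 (minors2 4 a1 a2)"
  shows "gdvd d2 (complex_of_real lam)"
  using assms by (rule icube2_ggcd_minors_dvd_norm)

end
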